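(* Let $n=2k$ with $k\in\mathbb N$, and let $a\in\mathbb R$, $a\neq0$. Then $|T_n(i/a)|\ge \frac12\left(\frac1a+1\right)^n$, where $T_n$ is the Tchebyshev polynomial of the first kind of degree $n$.
   Context: $T_n(x)=\frac12\left((x+\sqrt{x^2-1})^n+(x-\sqrt{x^2-1})^n\right)$, the Tchebyshev polynomial of the first kind of degree $n$. *)

theory Defs imports Complex_Main begin

text \<open>Tchebyshev polynomial of the first kind, defined by the explicit formula
  T_n(x) = ((x + sqrt(x^2-1))^n + (x - sqrt(x^2-1))^n)/2, evaluated at a complex
  argument (the value is independent of the choice of square root).\<close>
definition cheb_T :: "nat \<Rightarrow> complex \<Rightarrow> complex" where
  "cheb_T n x = ((x + csqrt (x^2 - 1))^n + (x - csqrt (x^2 - 1))^n) / 2"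

end

theory Submission imports Defs begin

text \<open>On the imaginary axis the square root in the explicit formula is again imaginary,
  csqrt ((i y)^2 - 1) = i s with s = sqrt (1 + y^2) \<ge> 1, so T_n (i y) is i^n times the real
  number ((y + s)^n + (y - s)^n) / 2. For even n both summands are nonnegative and one of them
  is (|y| + s)^n \<ge> (|y| + 1)^n \<ge> (y + 1)^n.\<close>

lemma csqrt_imaginary_square_minus_one:
  "csqrt ((\<i> * complex_of_real y)^2 - 1) = \<i> * complex_of_real (sqrt (1 + y^2))"
proof (rule csqrt_unique)
  show "(\<i> * complex_of_real (sqrt (1 + y^2)))^2 = (\<i> * complex_of_real y)^2 - 1"
    by (simp add: power_mult_distrib flip: of_real_power)
qed simp_all

lemma cheb_T_imaginary:
  fixes y :: real
  defines "s \<equiv> sqrt (1 + y^2)"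
  shows "cheb_T n (\<i> * complex_of_real y) = \<i>^n * complex_of_real (((y + s)^n + (y - s)^n) / 2)"
proof -
  have "\<i> * complex_of_real y + \<i> * complex_of_real s = \<i> * complex_of_real (y + s)"
       "\<i> * complex_of_real y - \<i> * complex_of_real s = \<i> * complex_of_real (y - s)"
    by (simp_all add: algebra_simps)
  then show ?thesis
    unfolding cheb_T_def csqrt_imaginary_square_minus_one s_def [symmetric]
    by (simp only: power_mult_distrib) (simp add: distrib_left)
qed

lemma norm_cheb_T_imaginary_even:
  fixes y :: real
  defines "s \<equiv> sqrt (1 + y^2)"
  assumes "even n"
  shows "cmod (cheb_T n (\<i> * complex_of_real y)) = ((y + s)^n + (y - s)^n) / 2"
proof -
  have "cmod (cheb_T n (\<i> * complex_of_real y)) = \<bar>((y + s)^n + (y - s)^n) / 2\<bar>"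
    unfolding cheb_T_imaginary s_def by (simp only: norm_mult norm_power norm_ii norm_of_real) simp
  then show ?thesis
    using assms(2) by (simp add: zero_le_even_power)
qed

lemma abs_plus_power_le_even_power_sum:
  fixes y s :: real
  assumes "even n" and "0 \<le> s"
  shows "(\<bar>y\<bar> + s)^n \<le> (y + s)^n + (y - s)^n"
proof (cases "0 \<le> y")
  case True
  then show ?thesis
    using \<open>even n\<close> by (simp add: zero_le_even_power)
next
  case False
  then have "(\<bar>y\<bar> + s)^n = (y - s)^n"
    using \<open>even n\<close> by (simp add: power_minus_even [of n "y - s", symmetric])
  then show ?thesis
    using \<open>even n\<close> by (simp add: zero_le_even_power)
qed

lemma norm_cheb_T_imaginary_even_ge:
  fixes y :: real
  assumes "even n"
  shows "(\<bar>y\<bar> + 1)^n / 2 \<le> cmod (cheb_T n (\<i> * complex_of_real y))"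
proof -
  define s where "s = sqrt (1 + y^2)"
  have "1 \<le> s"
    unfolding s_def by simp
  then have "(\<bar>y\<bar> + 1)^n \<le> (\<bar>y\<bar> + s)^n"
    by (intro power_mono) simp_all
  also have "\<dots> \<le> (y + s)^n + (y - s)^n"
    using \<open>even n\<close> \<open>1 \<le> s\<close> by (intro abs_plus_power_le_even_power_sum) simp_all
  finally show ?thesis
    using \<open>even n\<close> by (simp add: norm_cheb_T_imaginary_even s_def)
qed

theorem lemma1:
  fixes k :: nat and a :: real
  assumes "a \<noteq> 0"
  shows "cmod (cheb_T (2 * k) (\<i> / complex_of_real a)) \<ge> (1/2) * (1 / a + 1) ^ (2 * k)"
proof -
  have "(1 / a + 1)^(2 * k) = \<bar>1 / a + 1\<bar>^(2 * k)"
    by (simp add: power_even_abs)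
  also have "\<dots> \<le> (\<bar>1 / a\<bar> + 1)^(2 * k)"
    by (intro power_mono abs_triangle_ineq [THEN order_trans]) simp_all
  also have "\<dots> / 2 \<le> cmod (cheb_T (2 * k) (\<i> * complex_of_real (1 / a)))"
    by (intro norm_cheb_T_imaginary_even_ge) simp
  finally show ?thesis
    by (simp add: divide_complex_def)
qed

end
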